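(* For every composition $\lambda=(\lambda_1,\dots,\lambda_\ell)$ of $n$ and every tuple of integers $\mathbf{k}=(k_1,\dots,k_\ell)$, the weighted permutation module $M(\lambda,\mathbf{k})$ has a one-dimensional space of $S_n$-invariants.
   Context: Let $T\subset GL_n(\mathbb{C})$ be the diagonal torus, $S_n$ the subgroup of permutation matrices, and $T\rtimes S_n\cong\mathbb{C}^\times\wr S_n$ the monomial matrices. For a partition $\lambda$ of $r$ and integer $k$, $S^{\lambda,k}$ is the representation of $\mathbb{C}^\times\wr S_r$ on the Specht module $S^\lambda$ with each copy of $\mathbb{C}^\times$ acting by $z\mapsto z^k$. The weighted permutation module is $$M(\lambda,\mathbf{k}):=\mathrm{Ind}_{(\mathbb{C}^\times\wr S_{\lambda_1})\times\dots\times(\mathbb{C}^\times\wr S_{\lambda_\ell})}^{\mathbb{C}^\times\wr S_n}\left(S^{(\lambda_1),k_1}\otimes\dots\otimes S^{(\lambda_\ell),k_\ell}\right),$$ the product subgroup being block diagonal. *)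

theory Defs
  imports "HOL-Analysis.Analysis" "HOL-Library.Function_Algebras"
begin

text \<open>n x n complex matrices are modelled as functions nat => nat => complex,
  with all entries outside the range 0..n-1 equal to zero.\<close>

definition monomial_mat :: "nat \<Rightarrow> (nat \<Rightarrow> nat \<Rightarrow> complex) \<Rightarrow> bool" where
  "monomial_mat n A \<longleftrightarrow>
     (\<forall>i j. (n \<le> i \<or> n \<le> j) \<longrightarrow> A i j = 0) \<and>
     (\<forall>i<n. \<exists>!j. j < n \<and> A i j \<noteq> 0) \<and>
     (\<forall>j<n. \<exists>!i. i < n \<and> A i j \<noteq> 0)"

definition perm_mat :: "nat \<Rightarrow> (nat \<Rightarrow> nat \<Rightarrow> complex) \<Rightarrow> bool" where
  "perm_mat n A \<longleftrightarrow> monomial_mat n A \<and> (\<forall>i j. A i j \<noteq> 0 \<longrightarrow> A i j = 1)"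

definition mat_mult :: "nat \<Rightarrow> (nat \<Rightarrow> nat \<Rightarrow> complex) \<Rightarrow> (nat \<Rightarrow> nat \<Rightarrow> complex)
    \<Rightarrow> (nat \<Rightarrow> nat \<Rightarrow> complex)" where
  "mat_mult n A B = (\<lambda>i j. \<Sum>l<n. A i l * B l j)"

definition blk :: "nat list \<Rightarrow> nat \<Rightarrow> nat" where
  "blk lam i = (LEAST b. i < sum_list (take (Suc b) lam))"

text \<open>The block-diagonal subgroup (C^x wr S_lam1) x ... x (C^x wr S_lam_l).\<close>
definition block_mat :: "nat list \<Rightarrow> (nat \<Rightarrow> nat \<Rightarrow> complex) \<Rightarrow> bool" where
  "block_mat lam A \<longleftrightarrow> monomial_mat (sum_list lam) A \<and>
     (\<forall>i j. A i j \<noteq> 0 \<longrightarrow> blk lam i = blk lam j)"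

text \<open>The one-dimensional character S^{(lam1),k1} x ... x S^{(lam_l),k_l} of the
  block subgroup: the trivial Specht module S^{(r)} with each torus coordinate of
  block b acting by z ^ k_b.\<close>
definition wchar :: "nat list \<Rightarrow> int list \<Rightarrow> (nat \<Rightarrow> nat \<Rightarrow> complex) \<Rightarrow> complex" where
  "wchar lam k A = (\<Prod>i<sum_list lam. \<Prod>j<sum_list lam.
      if A i j \<noteq> 0 then A i j powi (k ! blk lam j) else 1)"

text \<open>Weighted permutation module M(lam,k), realised as the induced representation:
  functions f on the monomial group with f(h g) = chi(h) f(g) for h in the block
  subgroup; the group acts by right translation (g.f)(x) = f(x g).\<close>
definition wperm_module :: "nat list \<Rightarrow> int list \<Rightarrow> ((nat \<Rightarrow> nat \<Rightarrow> complex) \<Rightarrow> complex) set" where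
  "wperm_module lam k = {f.
     (\<forall>A. \<not> monomial_mat (sum_list lam) A \<longrightarrow> f A = 0) \<and>
     (\<forall>h g. block_mat lam h \<and> monomial_mat (sum_list lam) g \<longrightarrow>
        f (mat_mult (sum_list lam) h g) = wchar lam k h * f g)}"

definition Sn_invariants :: "nat list \<Rightarrow> int list \<Rightarrow> ((nat \<Rightarrow> nat \<Rightarrow> complex) \<Rightarrow> complex) set" where
  "Sn_invariants lam k = {f \<in> wperm_module lam k.
     \<forall>P x. perm_mat (sum_list lam) P \<and> monomial_mat (sum_list lam) x \<longrightarrow>
        f (mat_mult (sum_list lam) x P) = f x}"

definition fscale :: "complex \<Rightarrow> ('a \<Rightarrow> complex) \<Rightarrow> ('a \<Rightarrow> complex)" where
  "fscale c f = (\<lambda>x. c * f x)"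

end

theory Submission
  imports Defs
begin

text \<open>A monomial matrix \<open>x\<close> whose nonzero entries are \<open>x(i, s i)\<close> factors as \<open>x = D P\<close>, where
  \<open>D = diag(x(i, s i))\<close> lies in the block subgroup and \<open>P\<close> is the permutation matrix of \<open>s\<close>.
  Hence an \<open>S\<^sub>n\<close>-invariant \<open>f\<close> of \<open>M(\<lambda>, k)\<close> satisfies \<open>f x = f D = \<chi>(D) f(1)\<close> and is determined
  by \<open>f(1)\<close>. Conversely, weighting the entry of row \<open>i\<close> by the exponent of the block of \<open>i\<close>,
  the function \<open>x \<mapsto> \<Prod>\<^sub>i x(i, s i)^k\<^bsub>blk i\<^esub>\<close> is an invariant: left multiplication by the
  block subgroup keeps every row inside its block, and right multiplication by a permutation
  matrix only moves entries within their row.\<close>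

definition monomial_perm :: "nat \<Rightarrow> (nat \<Rightarrow> nat \<Rightarrow> complex) \<Rightarrow> (nat \<Rightarrow> nat) \<Rightarrow> bool" where
  "monomial_perm n A s \<longleftrightarrow>
     bij_betw s {..<n} {..<n} \<and> (\<forall>i j. A i j \<noteq> 0 \<longleftrightarrow> i < n \<and> j = s i)"

definition diag_mat :: "nat \<Rightarrow> (nat \<Rightarrow> complex) \<Rightarrow> nat \<Rightarrow> nat \<Rightarrow> complex" where
  "diag_mat n d = (\<lambda>i j. if i < n \<and> j = i then d i else 0)"

abbreviation id_mat :: "nat \<Rightarrow> nat \<Rightarrow> nat \<Rightarrow> complex" where
  "id_mat n \<equiv> diag_mat n (\<lambda>_. 1)"

definition perm_mat_of :: "nat \<Rightarrow> (nat \<Rightarrow> nat) \<Rightarrow> nat \<Rightarrow> nat \<Rightarrow> complex" where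
  "perm_mat_of n s = (\<lambda>i j. if i < n \<and> j = s i then 1 else 0)"

lemma monomial_perm_less: "monomial_perm n A s \<Longrightarrow> i < n \<Longrightarrow> s i < n"
  unfolding monomial_perm_def by (meson bij_betwE lessThan_iff)

lemma monomial_perm_nonzero: "monomial_perm n A s \<Longrightarrow> i < n \<Longrightarrow> A i (s i) \<noteq> 0"
  unfolding monomial_perm_def by blast

lemma monomial_mat_obtains_perm:
  assumes "monomial_mat n A"
  obtains s where "monomial_perm n A s"
proof
  have zero: "\<And>i j. n \<le> i \<or> n \<le> j \<Longrightarrow> A i j = 0"
    and row: "\<And>i. i < n \<Longrightarrow> \<exists>!j. j < n \<and> A i j \<noteq> 0"
    and col: "\<And>j. j < n \<Longrightarrow> \<exists>!i. i < n \<and> A i j \<noteq> 0"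
    using assms unfolding monomial_mat_def by blast+
  define s where "s i = (THE j. j < n \<and> A i j \<noteq> 0)" for i
  have s: "s i < n \<and> A i (s i) \<noteq> 0" if "i < n" for i
    unfolding s_def by (rule theI'[OF row[OF that]])
  have graph: "A i j \<noteq> 0 \<longleftrightarrow> i < n \<and> j = s i" for i j
    using zero[of i j] row[of i] s[of i] by (metis not_le)
  have "inj_on s {..<n}"
    by (rule inj_onI) (use col s in \<open>metis lessThan_iff\<close>)
  moreover have "s ` {..<n} = {..<n}"
    by (rule endo_inj_surj) (use s \<open>inj_on s {..<n}\<close> in auto)
  ultimately show "monomial_perm n A s"
    unfolding monomial_perm_def bij_betw_def using graph by blast
qed

lemma monomial_perm_imp_monomial_mat:
  assumes "monomial_perm n A s"
  shows "monomial_mat n A"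
proof -
  have bij: "bij_betw s {..<n} {..<n}" and graph: "\<And>i j. A i j \<noteq> 0 \<longleftrightarrow> i < n \<and> j = s i"
    using assms by (simp_all add: monomial_perm_def)
  have zero: "A i j = 0" if "n \<le> i \<or> n \<le> j" for i j
  proof (rule ccontr)
    assume "A i j \<noteq> 0"
    then have "i < n" "j = s i"
      using graph[of i j] by simp_all
    then show False
      using that monomial_perm_less[OF assms, of i] by simp
  qed
  have row: "\<exists>!j. j < n \<and> A i j \<noteq> 0" if "i < n" for i
    by (rule ex1I[of _ "s i"]) (use that graph monomial_perm_less[OF assms] in auto)
  have col: "\<exists>!i. i < n \<and> A i j \<noteq> 0" if "j < n" for j
  proof -
    have "j \<in> s ` {..<n}"
      using bij \<open>j < n\<close> unfolding bij_betw_def by simp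
    then obtain i where i: "i < n" "j = s i"
      by auto
    show ?thesis
    proof (rule ex1I[of _ i])
      show "i < n \<and> A i j \<noteq> 0"
        using i graph by simp
    next
      fix i' assume "i' < n \<and> A i' j \<noteq> 0"
      then have "i' < n" "s i' = s i"
        using graph i by auto
      then show "i' = i"
        using bij i(1) unfolding bij_betw_def by (auto dest: inj_onD)
    qed
  qed
  show ?thesis
    unfolding monomial_mat_def using zero row col by (intro conjI allI impI) auto
qed

lemma monomial_perm_diag_mat:
  "(\<And>i. i < n \<Longrightarrow> d i \<noteq> 0) \<Longrightarrow> monomial_perm n (diag_mat n d) id"
  unfolding monomial_perm_def diag_mat_def by auto

lemma monomial_perm_perm_mat_of:
  "bij_betw s {..<n} {..<n} \<Longrightarrow> monomial_perm n (perm_mat_of n s) s"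
  unfolding monomial_perm_def perm_mat_of_def by auto

lemma perm_mat_perm_mat_of:
  "bij_betw s {..<n} {..<n} \<Longrightarrow> perm_mat n (perm_mat_of n s)"
  unfolding perm_mat_def
  using monomial_perm_imp_monomial_mat[OF monomial_perm_perm_mat_of] by (simp add: perm_mat_of_def)

lemma block_mat_diag_mat:
  "(\<And>i. i < sum_list lam \<Longrightarrow> d i \<noteq> 0) \<Longrightarrow> block_mat lam (diag_mat (sum_list lam) d)"
  unfolding block_mat_def
  using monomial_perm_imp_monomial_mat[OF monomial_perm_diag_mat] by (simp add: diag_mat_def)

lemma prod_monomial_perm:
  assumes "monomial_perm n A s"
  shows "(\<Prod>i<n. \<Prod>j<n. if A i j \<noteq> 0 then F i j (A i j) else 1) = (\<Prod>i<n. F i (s i) (A i (s i)))"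
proof (rule prod.cong[OF refl])
  fix i assume i: "i \<in> {..<n}"
  have "(\<Prod>j<n. if A i j \<noteq> 0 then F i j (A i j) else 1) = (\<Prod>j<n. if j = s i then F i j (A i j) else 1)"
    using assms i unfolding monomial_perm_def by (intro prod.cong) auto
  also have "\<dots> = F i (s i) (A i (s i))"
    using monomial_perm_less[OF assms] i by (simp add: prod.delta)
  finally show "(\<Prod>j<n. if A i j \<noteq> 0 then F i j (A i j) else 1) = F i (s i) (A i (s i))" .
qed

lemma mat_mult_monomial_perm_left:
  assumes "monomial_perm n A s"
  shows "mat_mult n A B i j = (if i < n then A i (s i) * B (s i) j else 0)"
proof -
  have "mat_mult n A B i j = (\<Sum>l<n. if i < n \<and> l = s i then A i l * B l j else 0)"
    unfolding mat_mult_def using assms unfolding monomial_perm_def by (intro sum.cong) auto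
  then show ?thesis using monomial_perm_less[OF assms] by (simp add: sum.delta)
qed

lemma monomial_perm_mat_mult:
  assumes "monomial_perm n A s" "monomial_perm n B t"
  shows "monomial_perm n (mat_mult n A B) (t \<circ> s)"
proof -
  have "bij_betw (t \<circ> s) {..<n} {..<n}"
    using assms unfolding monomial_perm_def by (metis bij_betw_trans)
  moreover have "mat_mult n A B i j \<noteq> 0 \<longleftrightarrow> i < n \<and> j = (t \<circ> s) i" for i j
    using mat_mult_monomial_perm_left[OF assms(1)] monomial_perm_nonzero[OF assms(1)]
      monomial_perm_less[OF assms(1)] assms(2)
    unfolding monomial_perm_def by auto
  ultimately show ?thesis unfolding monomial_perm_def by blast
qed

lemma mat_mult_id_mat_right:
  assumes "\<And>i j. n \<le> i \<or> n \<le> j \<Longrightarrow> A i j = 0"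
  shows "mat_mult n A (id_mat n) = A"
proof (intro ext)
  fix i j
  have "mat_mult n A (id_mat n) i j = (\<Sum>l<n. if l = j then A i l else 0)"
    unfolding mat_mult_def diag_mat_def by (intro sum.cong) auto
  then show "mat_mult n A (id_mat n) i j = A i j" using assms[of i j] by (simp add: sum.delta)
qed

lemma monomial_perm_diag_perm_factor:
  assumes "monomial_perm n x s"
  shows "mat_mult n (diag_mat n (\<lambda>i. x i (s i))) (perm_mat_of n s) = x"
proof (intro ext)
  fix i j
  show "mat_mult n (diag_mat n (\<lambda>i. x i (s i))) (perm_mat_of n s) i j = x i j"
    using mat_mult_monomial_perm_left[OF monomial_perm_diag_mat, of n "\<lambda>i. x i (s i)"]
      monomial_perm_nonzero[OF assms] assms
    unfolding monomial_perm_def diag_mat_def perm_mat_of_def by auto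
qed

definition canonical_invariant :: "nat list \<Rightarrow> int list \<Rightarrow> (nat \<Rightarrow> nat \<Rightarrow> complex) \<Rightarrow> complex" where
  "canonical_invariant lam k A = (if monomial_mat (sum_list lam) A then
     (\<Prod>i<sum_list lam. \<Prod>j<sum_list lam. if A i j \<noteq> 0 then A i j powi (k ! blk lam i) else 1)
   else 0)"

lemma canonical_invariant_eq:
  "monomial_perm (sum_list lam) A s \<Longrightarrow>
     canonical_invariant lam k A = (\<Prod>i<sum_list lam. A i (s i) powi (k ! blk lam i))"
  unfolding canonical_invariant_def
  using monomial_perm_imp_monomial_mat prod_monomial_perm[of "sum_list lam" A s "\<lambda>i j a. a powi (k ! blk lam i)"]
  by auto

lemma wchar_eq:
  assumes "monomial_perm (sum_list lam) A s" "block_mat lam A"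
  shows "wchar lam k A = (\<Prod>i<sum_list lam. A i (s i) powi (k ! blk lam i))"
proof -
  have "blk lam (s i) = blk lam i" if "i < sum_list lam" for i
    using assms(2) monomial_perm_nonzero[OF assms(1) that] unfolding block_mat_def by metis
  then show ?thesis
    unfolding wchar_def prod_monomial_perm[OF assms(1), of "\<lambda>i j a. a powi (k ! blk lam j)"]
    by (intro prod.cong) auto
qed

lemma canonical_invariant_mult_block:
  assumes h: "block_mat lam h" and g: "monomial_mat (sum_list lam) g"
  shows "canonical_invariant lam k (mat_mult (sum_list lam) h g) = wchar lam k h * canonical_invariant lam k g"
proof -
  let ?n = "sum_list lam"
  let ?w = "\<lambda>i. k ! blk lam i"
  obtain s where s: "monomial_perm ?n h s"
    using h monomial_mat_obtains_perm unfolding block_mat_def by blast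
  obtain t where t: "monomial_perm ?n g t"
    using g monomial_mat_obtains_perm by blast
  have same_blk: "blk lam (s i) = blk lam i" if "i < ?n" for i
    using h monomial_perm_nonzero[OF s that] unfolding block_mat_def by metis
  have "canonical_invariant lam k (mat_mult ?n h g) = (\<Prod>i<?n. mat_mult ?n h g i (t (s i)) powi ?w i)"
    using canonical_invariant_eq[OF monomial_perm_mat_mult[OF s t]] by simp
  also have "\<dots> = (\<Prod>i<?n. h i (s i) powi ?w i * g (s i) (t (s i)) powi ?w (s i))"
    by (intro prod.cong) (auto simp: mat_mult_monomial_perm_left[OF s] power_int_mult_distrib same_blk)
  also have "\<dots> = (\<Prod>i<?n. h i (s i) powi ?w i) * (\<Prod>i<?n. g (s i) (t (s i)) powi ?w (s i))"
    by (simp add: prod.distrib)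
  also have "(\<Prod>i<?n. g (s i) (t (s i)) powi ?w (s i)) = (\<Prod>i<?n. g i (t i) powi ?w i)"
    using prod.reindex_bij_betw[of s "{..<?n}" "{..<?n}" "\<lambda>i. g i (t i) powi ?w i"] s
    unfolding monomial_perm_def by simp
  finally show ?thesis using wchar_eq[OF s h] canonical_invariant_eq[OF t] by simp
qed

lemma canonical_invariant_mult_perm:
  assumes P: "perm_mat (sum_list lam) P" and x: "monomial_mat (sum_list lam) x"
  shows "canonical_invariant lam k (mat_mult (sum_list lam) x P) = canonical_invariant lam k x"
proof -
  let ?n = "sum_list lam"
  obtain s where s: "monomial_perm ?n x s"
    using x monomial_mat_obtains_perm by blast
  obtain t where t: "monomial_perm ?n P t"
    using P monomial_mat_obtains_perm unfolding perm_mat_def by blast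
  have "P i (t i) = 1" if "i < ?n" for i
    using monomial_perm_nonzero[OF t that] P unfolding perm_mat_def by blast
  then have "mat_mult ?n x P i (t (s i)) = x i (s i)" if "i < ?n" for i
    using that monomial_perm_less[OF s that] by (simp add: mat_mult_monomial_perm_left[OF s])
  then show ?thesis
    using canonical_invariant_eq[OF monomial_perm_mat_mult[OF s t]] canonical_invariant_eq[OF s]
    by simp
qed

lemma canonical_invariant_in_Sn_invariants: "canonical_invariant lam k \<in> Sn_invariants lam k"
  unfolding Sn_invariants_def wperm_module_def
  using canonical_invariant_mult_block canonical_invariant_mult_perm
  by (auto simp: canonical_invariant_def)

lemma canonical_invariant_id_mat: "canonical_invariant lam k (id_mat (sum_list lam)) = 1"
  using canonical_invariant_eq[OF monomial_perm_diag_mat[where n = "sum_list lam" and d = "\<lambda>_. 1"]]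
  by (simp add: diag_mat_def)

lemma Sn_invariant_eq_fscale_canonical_invariant:
  assumes f: "f \<in> Sn_invariants lam k"
  shows "f = fscale (f (id_mat (sum_list lam))) (canonical_invariant lam k)"
proof
  fix x
  let ?n = "sum_list lam"
  show "f x = fscale (f (id_mat ?n)) (canonical_invariant lam k) x"
  proof (cases "monomial_mat ?n x")
    case False
    then show ?thesis
      using f unfolding Sn_invariants_def wperm_module_def fscale_def canonical_invariant_def by auto
  next
    case True
    then obtain s where s: "monomial_perm ?n x s"
      by (rule monomial_mat_obtains_perm)
    define D where "D = diag_mat ?n (\<lambda>i. x i (s i))"
    have D: "monomial_perm ?n D id" "block_mat lam D"
      unfolding D_def using monomial_perm_nonzero[OF s]
      by (auto intro: monomial_perm_diag_mat block_mat_diag_mat)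
    have D_id: "mat_mult ?n D (id_mat ?n) = D"
      by (rule mat_mult_id_mat_right) (auto simp: D_def diag_mat_def)
    have "f x = f (mat_mult ?n D (perm_mat_of ?n s))"
      unfolding D_def monomial_perm_diag_perm_factor[OF s] ..
    also have "\<dots> = f D"
      using f perm_mat_perm_mat_of s monomial_perm_imp_monomial_mat[OF D(1)]
      unfolding Sn_invariants_def monomial_perm_def by blast
    also have "\<dots> = f (mat_mult ?n D (id_mat ?n))"
      by (simp only: D_id)
    also have "\<dots> = wchar lam k D * f (id_mat ?n)"
      using f D(2) monomial_perm_imp_monomial_mat[OF monomial_perm_diag_mat, of ?n "\<lambda>_. 1"]
      unfolding Sn_invariants_def wperm_module_def by simp
    also have "wchar lam k D = canonical_invariant lam k x"
      using wchar_eq[OF D] canonical_invariant_eq[OF s] by (simp add: D_def diag_mat_def)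
    finally show ?thesis unfolding fscale_def by simp
  qed
qed

lemma vector_space_fscale: "vector_space fscale"
  by unfold_locales (auto simp: fscale_def fun_eq_iff algebra_simps)

lemma (in vector_space) dim_eq_1_if_subset_span_singleton:
  assumes "v \<in> V" "v \<noteq> 0" "V \<subseteq> span {v}"
  shows "dim V = 1"
proof -
  have "span {v} = span V"
    using assms(1,3) span_base by (auto simp: span_eq)
  moreover have "independent {v}"
    using assms(2) by (intro independent_insertI independent_empty) (simp add: span_empty)
  ultimately show ?thesis
    using dim_eq_card by fastforce
qed

theorem lemma3p2:
  fixes lam :: "nat list" and k :: "int list" and n :: nat
  assumes "sum_list lam = n"
    and "\<forall>x\<in>set lam. 0 < x"
    and "length k = length lam"
  shows "vector_space.dim fscale (Sn_invariants lam k) = 1"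
proof -
  interpret V: vector_space fscale
    by (rule vector_space_fscale)
  have "Sn_invariants lam k \<subseteq> V.span {canonical_invariant lam k}"
    using Sn_invariant_eq_fscale_canonical_invariant unfolding V.span_singleton by blast
  moreover have "canonical_invariant lam k \<noteq> 0"
    using canonical_invariant_id_mat[of lam k] by (metis zero_fun_apply zero_neq_one)
  ultimately show ?thesis
    using V.dim_eq_1_if_subset_span_singleton canonical_invariant_in_Sn_invariants by blast
qed

end
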